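(* Let $R$ be a commutative ring with unity in which every zero divisor is harmless. Then every B-irreducible element of $R$ is irreducible.
   Context: A zero divisor $r$ of $R$ is called harmless if there exists a unit $u\in R$ with $r=1-u$. An element $r\in R$ is called irreducible if whenever $r=ab$ with $a,b\in R$, then $a$ is a unit or $b$ is a unit. A non-zero, non-unit element $r\in R$ is called B-irreducible if the principal ideal $(r)$ is a maximal element, with respect to inclusion, of the set of all proper principal ideals of $R$. *)

theory Defs
  imports Main
begin

definition zero_divisor :: "'a::comm_ring_1 \<Rightarrow> bool" where
  "zero_divisor r \<longleftrightarrow> (\<exists>s. s \<noteq> 0 \<and> r * s = 0)"

definition harmless :: "'a::comm_ring_1 \<Rightarrow> bool" where
  "harmless r \<longleftrightarrow> zero_divisor r \<and> (\<exists>u. u dvd 1 \<and> r = 1 - u)"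

text \<open>Irreducible in the sense of the paper (no nonzero/nonunit requirement).\<close>
definition irred :: "'a::comm_ring_1 \<Rightarrow> bool" where
  "irred r \<longleftrightarrow> (\<forall>a b. r = a * b \<longrightarrow> a dvd 1 \<or> b dvd 1)"

definition principal_ideal :: "'a::comm_ring_1 \<Rightarrow> 'a set" where
  "principal_ideal r = {r * x | x. True}"

definition B_irreducible :: "'a::comm_ring_1 \<Rightarrow> bool" where
  "B_irreducible r \<longleftrightarrow> r \<noteq> 0 \<and> \<not> r dvd 1 \<and>
     (\<forall>s. principal_ideal s \<noteq> UNIV \<longrightarrow> principal_ideal r \<subseteq> principal_ideal s
          \<longrightarrow> principal_ideal s = principal_ideal r)"

end

theory Submission
  imports Defs
begin

text \<open>If \<open>r = a * b\<close> with \<open>a\<close> a non-unit, maximality of \<open>(r)\<close> among proper principal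
  ideals forces \<open>(a) = (r)\<close>, so \<open>a = r * c\<close> and \<open>r * (1 - c * b) = 0\<close>. As \<open>r \<noteq> 0\<close>,
  \<open>1 - c * b\<close> is a zero divisor, hence harmless, so \<open>c * b\<close> is a unit and so is \<open>b\<close>.\<close>

lemma principal_ideal_subset_iff:
  "principal_ideal r \<subseteq> principal_ideal s \<longleftrightarrow> s dvd r"
proof
  assume "principal_ideal r \<subseteq> principal_ideal s"
  moreover have "r \<in> principal_ideal r"
    unfolding principal_ideal_def by (metis (mono_tags) mem_Collect_eq mult_1_right)
  ultimately show "s dvd r"
    by (auto simp: principal_ideal_def)
next
  assume "s dvd r"
  then obtain k where "r = s * k" ..
  then show "principal_ideal r \<subseteq> principal_ideal s"
    by (auto simp: principal_ideal_def mult.assoc)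
qed

lemma principal_ideal_eq_UNIV_iff:
  "principal_ideal a = UNIV \<longleftrightarrow> a dvd 1"
proof
  assume "principal_ideal a = UNIV"
  then show "a dvd 1"
    using principal_ideal_subset_iff[of 1 a] by simp
next
  assume "a dvd 1"
  then have "principal_ideal 1 \<subseteq> principal_ideal a"
    by (simp add: principal_ideal_subset_iff)
  moreover have "principal_ideal 1 = UNIV"
    by (simp add: principal_ideal_def)
  ultimately show "principal_ideal a = UNIV"
    by blast
qed

lemma B_irreducible_dvd_nonunit_divisor:
  assumes "B_irreducible r" and "a dvd r" and "\<not> a dvd 1"
  shows "r dvd a"
proof -
  have "principal_ideal a \<noteq> UNIV" "principal_ideal r \<subseteq> principal_ideal a"
    using assms(2,3) by (simp_all only: principal_ideal_eq_UNIV_iff principal_ideal_subset_iff not_False_eq_True)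
  with assms(1) have "principal_ideal a = principal_ideal r"
    unfolding B_irreducible_def by blast
  then show ?thesis
    using principal_ideal_subset_iff[of a r] by simp
qed

lemma harmless_one_minus_unit:
  "harmless z \<Longrightarrow> (1 - z) dvd 1"
  by (auto simp: harmless_def)

theorem mainTheorem2:
  fixes r :: "'a::comm_ring_1"
  assumes "\<forall>z::'a. zero_divisor z \<longrightarrow> harmless z"
    and "B_irreducible r"
  shows "irred r"
  unfolding irred_def
proof (intro allI impI)
  fix a b assume rab: "r = a * b"
  show "a dvd 1 \<or> b dvd 1"
  proof (cases "a dvd 1")
    case False
    with rab assms(2) have "r dvd a"
      by (simp add: B_irreducible_dvd_nonunit_divisor)
    then obtain c where "a = r * c" ..
    with rab have "(1 - c * b) * r = 0"
      by (simp add: algebra_simps)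
    moreover have "r \<noteq> 0"
      using assms(2) by (simp add: B_irreducible_def)
    ultimately have "zero_divisor (1 - c * b)"
      unfolding zero_divisor_def by blast
    with assms(1) have "harmless (1 - c * b)"
      by blast
    then have "c * b dvd 1"
      using harmless_one_minus_unit by fastforce
    then show ?thesis
      using dvd_mult_right by auto
  qed simp
qed

end
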